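(* Let $(F,v)$ be a Krasner valued hyperfield with norm $\rho_v$, and let $w$ be a valuation on $F$ with $\mathcal{O}_w=\{x\in F: x-x\subseteq 1-1\}$ (such $w$ exists and is a Krasner valuation). Then $w$ is equivalent to the coarsening $v_{\mathrm{ig}(\rho_v)}$ of $v$ corresponding to the convex subgroup $\mathrm{ig}(\rho_v)$. In particular, $v_{\mathrm{ig}(\rho_v)}$ is a Krasner valuation.
   Context: A hyperfield is $(F,+,\cdot,0,1)$ with $+$ a multivalued operation making $(F,+,0)$ a canonical hypergroup (associative, commutative, unique inverses $-x$ with $0\in x+(-x)$, and $z\in x+y\Rightarrow y\in z+(-x)$; write $x-y:=x+(-y)$, $A+B:=\bigcup_{a\in A,b\in B}a+b$), $(F,\cdot)$ commutative with $0$ absorbing, $x(y+z)=xy+xz$, and $F\setminus\{0\}$ an abelian group with neutral $1\neq0$. Valuation on $F$: for an ordered abelian group $\Gamma$ and $\infty>\Gamma$ with $\gamma+\infty=\infty+\gamma=\infty$, a surjective map $v:F\to\Gamma\cup\{\infty\}$ with $vx=\infty\iff x=0$, $v(xy)=vx+vy$, $z\in x+y\Rightarrow vz\ge\min\{vx,vy\}$; $vF:=v(F\setminus\{0\})$, $\mathcal{O}_v:=\{x:vx\ge0\}$. Valuations $v_i:F\to\Gamma_i\cup\{\infty\}$ are equivalent if $v_2=\sigma\circ v_1$ for an order-preserving group isomorphism $\sigma:\Gamma_1\to\Gamma_2$ ($\sigma(\infty)=\infty$). An initial segment of $\Gamma$ is $\rho\subseteq\Gamma$ with $\delta\in\rho,\gamma<\delta\Rightarrow\gamma\in\rho$;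 $\rho+\gamma:=\{\delta+\gamma:\delta\in\rho\}$; "$\alpha>\rho+\gamma$" means $\alpha\notin\rho+\gamma$. The invariance group of $\rho$ is $\mathrm{ig}(\rho):=\{\gamma\in\Gamma:\rho+\gamma=\rho\}$; if $0\in\rho$ it is a convex subgroup of $\Gamma$ (a subgroup $\Delta$ with $\delta_1<\gamma<\delta_2$, $\delta_i\in\Delta\Rightarrow\gamma\in\Delta$). For a convex subgroup $\Delta$ of $vF$, $vF/\Delta$ is ordered by $x+\Delta\prec y+\Delta$ iff $x<y$ and $y-x\notin\Delta$, and the coarsening $v_\Delta:F\to(vF/\Delta)\cup\{\infty\}$, $x\mapsto vx+\Delta$, is a valuation on $F$. Krasner valuation: a valuation $v$ on $F$ such that (KVH1) for all $x,y\in F$ with $0\notin x+y$, $v(x+y)$ is a singleton; (KVH2) there is an initial segment $\rho_v$ of $vF$ with $0\in\rho_v$ (the norm) such that for all $x,y,z,t\in F$ with $z\in x+y$: $t\in x+y$ iff $vs>\rho_v+\min\{vx,vy\}$ for all $s\in z-t$. *)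

theory Defs
  imports Main
begin

definition hsetadd :: "('a \<Rightarrow> 'a \<Rightarrow> 'a set) \<Rightarrow> 'a set \<Rightarrow> 'a set \<Rightarrow> 'a set" where
  "hsetadd add A B = (\<Union>a\<in>A. \<Union>b\<in>B. add a b)"

definition hneg :: "('a \<Rightarrow> 'a \<Rightarrow> 'a set) \<Rightarrow> 'a \<Rightarrow> 'a \<Rightarrow> 'a" where
  "hneg add zero x = (THE y. zero \<in> add x y)"

definition hsub :: "('a \<Rightarrow> 'a \<Rightarrow> 'a set) \<Rightarrow> 'a \<Rightarrow> 'a \<Rightarrow> 'a \<Rightarrow> 'a set" where
  "hsub add zero x y = add x (hneg add zero y)"

definition hyperfield ::
  "('a \<Rightarrow> 'a \<Rightarrow> 'a set) \<Rightarrow> ('a \<Rightarrow> 'a \<Rightarrow> 'a) \<Rightarrow> 'a \<Rightarrow> 'a \<Rightarrow> bool" where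
  "hyperfield add mul zero one \<longleftrightarrow>
     \<comment> \<open>(F,+,0) canonical hypergroup\<close>
     (\<forall>x y. add x y \<noteq> {}) \<and>
     (\<forall>x y z. hsetadd add (add x y) {z} = hsetadd add {x} (add y z)) \<and>
     (\<forall>x y. add x y = add y x) \<and>
     (\<forall>x. add zero x = {x}) \<and>
     (\<forall>x. \<exists>!y. zero \<in> add x y) \<and>
     (\<forall>x y z. z \<in> add x y \<longrightarrow> y \<in> add z (hneg add zero x)) \<and>
     \<comment> \<open>multiplication\<close>
     (\<forall>x y. mul x y = mul y x) \<and>
     (\<forall>x y z. mul (mul x y) z = mul x (mul y z)) \<and>
     (\<forall>x. mul zero x = zero) \<and>
     (\<forall>x y z. mul x ` add y z = add (mul x y) (mul x z)) \<and>
     \<comment> \<open>F minus 0 is an abelian group with neutral element 1 \<noteq> 0\<close>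
     one \<noteq> zero \<and>
     (\<forall>x. mul one x = x) \<and>
     (\<forall>x y. x \<noteq> zero \<longrightarrow> y \<noteq> zero \<longrightarrow> mul x y \<noteq> zero) \<and>
     (\<forall>x. x \<noteq> zero \<longrightarrow> (\<exists>y. y \<noteq> zero \<and> mul x y = one))"

record 'g ogroup =
  og_carrier :: "'g set"
  og_add :: "'g \<Rightarrow> 'g \<Rightarrow> 'g"
  og_zero :: 'g
  og_le :: "'g \<Rightarrow> 'g \<Rightarrow> bool"

definition ordered_abelian_group :: "('g, 'm) ogroup_scheme \<Rightarrow> bool" where
  "ordered_abelian_group G \<longleftrightarrow>
     (\<forall>a\<in>og_carrier G. \<forall>b\<in>og_carrier G. og_add G a b \<in> og_carrier G) \<and>
     (\<forall>a\<in>og_carrier G. \<forall>b\<in>og_carrier G. \<forall>c\<in>og_carrier G.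
        og_add G (og_add G a b) c = og_add G a (og_add G b c)) \<and>
     (\<forall>a\<in>og_carrier G. \<forall>b\<in>og_carrier G. og_add G a b = og_add G b a) \<and>
     og_zero G \<in> og_carrier G \<and>
     (\<forall>a\<in>og_carrier G. og_add G (og_zero G) a = a) \<and>
     (\<forall>a\<in>og_carrier G. \<exists>b\<in>og_carrier G. og_add G a b = og_zero G) \<and>
     (\<forall>a\<in>og_carrier G. og_le G a a) \<and>
     (\<forall>a\<in>og_carrier G. \<forall>b\<in>og_carrier G. og_le G a b \<longrightarrow> og_le G b a \<longrightarrow> a = b) \<and>
     (\<forall>a\<in>og_carrier G. \<forall>b\<in>og_carrier G. \<forall>c\<in>og_carrier G.
        og_le G a b \<longrightarrow> og_le G b c \<longrightarrow> og_le G a c) \<and>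
     (\<forall>a\<in>og_carrier G. \<forall>b\<in>og_carrier G. og_le G a b \<or> og_le G b a) \<and>
     (\<forall>a\<in>og_carrier G. \<forall>b\<in>og_carrier G. \<forall>c\<in>og_carrier G.
        og_le G a b \<longrightarrow> og_le G (og_add G a c) (og_add G b c))"

definition type_og :: "('g::linordered_ab_group_add) ogroup" where
  "type_og = \<lparr>og_carrier = UNIV, og_add = (+), og_zero = 0, og_le = (\<le>)\<rparr>"

text \<open>Gamma \<union> {\<infinity>} is modelled as 'g option, with None = \<infinity>.\<close>

fun ext_le :: "('g, 'm) ogroup_scheme \<Rightarrow> 'g option \<Rightarrow> 'g option \<Rightarrow> bool" where
  "ext_le G a None = True"
| "ext_le G None (Some b) = False"
| "ext_le G (Some a) (Some b) = og_le G a b"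

fun ext_add :: "('g, 'm) ogroup_scheme \<Rightarrow> 'g option \<Rightarrow> 'g option \<Rightarrow> 'g option" where
  "ext_add G (Some a) (Some b) = Some (og_add G a b)"
| "ext_add G _ _ = None"

definition ext_min :: "('g, 'm) ogroup_scheme \<Rightarrow> 'g option \<Rightarrow> 'g option \<Rightarrow> 'g option" where
  "ext_min G a b = (if ext_le G a b then a else b)"

definition valuation ::
  "('a \<Rightarrow> 'a \<Rightarrow> 'a set) \<Rightarrow> ('a \<Rightarrow> 'a \<Rightarrow> 'a) \<Rightarrow> 'a \<Rightarrow> ('g, 'm) ogroup_scheme
     \<Rightarrow> ('a \<Rightarrow> 'g option) \<Rightarrow> bool" where
  "valuation add mul zero G v \<longleftrightarrow>
     ordered_abelian_group G \<and>
     range v = insert None (Some ` og_carrier G) \<and>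
     (\<forall>x. v x = None \<longleftrightarrow> x = zero) \<and>
     (\<forall>x y. v (mul x y) = ext_add G (v x) (v y)) \<and>
     (\<forall>x y z. z \<in> add x y \<longrightarrow> ext_le G (ext_min G (v x) (v y)) (v z))"

definition value_group :: "('a \<Rightarrow> 'g option) \<Rightarrow> 'g set" where
  "value_group v = {g. \<exists>x. v x = Some g}"

definition valuation_ring :: "('g, 'm) ogroup_scheme \<Rightarrow> ('a \<Rightarrow> 'g option) \<Rightarrow> 'a set" where
  "valuation_ring G v = {x. ext_le G (Some (og_zero G)) (v x)}"

definition equivalent_valuations ::
  "('g1, 'm1) ogroup_scheme \<Rightarrow> ('a \<Rightarrow> 'g1 option) \<Rightarrow>
   ('g2, 'm2) ogroup_scheme \<Rightarrow> ('a \<Rightarrow> 'g2 option) \<Rightarrow> bool" where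
  "equivalent_valuations G1 v1 G2 v2 \<longleftrightarrow>
     (\<exists>\<sigma>. bij_betw \<sigma> (og_carrier G1) (og_carrier G2) \<and>
        (\<forall>a\<in>og_carrier G1. \<forall>b\<in>og_carrier G1. \<sigma> (og_add G1 a b) = og_add G2 (\<sigma> a) (\<sigma> b)) \<and>
        (\<forall>a\<in>og_carrier G1. \<forall>b\<in>og_carrier G1. og_le G1 a b \<longleftrightarrow> og_le G2 (\<sigma> a) (\<sigma> b)) \<and>
        (\<forall>x. v2 x = map_option \<sigma> (v1 x)))"

definition shift :: "('g, 'm) ogroup_scheme \<Rightarrow> 'g set \<Rightarrow> 'g \<Rightarrow> 'g set" where
  "shift G \<rho> \<gamma> = (\<lambda>\<delta>. og_add G \<delta> \<gamma>) ` \<rho>"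

definition initial_segment :: "('g, 'm) ogroup_scheme \<Rightarrow> 'g set \<Rightarrow> 'g set \<Rightarrow> bool" where
  "initial_segment G S \<rho> \<longleftrightarrow> \<rho> \<subseteq> S \<and>
     (\<forall>\<delta>\<in>\<rho>. \<forall>\<gamma>\<in>S. og_le G \<gamma> \<delta> \<and> \<gamma> \<noteq> \<delta> \<longrightarrow> \<gamma> \<in> \<rho>)"

definition ig :: "('g, 'm) ogroup_scheme \<Rightarrow> 'g set \<Rightarrow> 'g set" where
  "ig G \<rho> = {\<gamma> \<in> og_carrier G. shift G \<rho> \<gamma> = \<rho>}"

text \<open>"alpha > rho + gamma" for alpha, gamma in Gamma \<union> {\<infinity>}: means alpha \<notin> rho + gamma,
  with the convention rho + \<infinity> = Gamma.\<close>
fun above_shift :: "('g, 'm) ogroup_scheme \<Rightarrow> 'g set \<Rightarrow> 'g option \<Rightarrow> 'g option \<Rightarrow> bool" where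
  "above_shift G \<rho> None \<gamma> = True"
| "above_shift G \<rho> (Some a) None = False"
| "above_shift G \<rho> (Some a) (Some g) = (a \<notin> shift G \<rho> g)"

definition krasner_norm ::
  "('a \<Rightarrow> 'a \<Rightarrow> 'a set) \<Rightarrow> 'a \<Rightarrow> ('g, 'm) ogroup_scheme \<Rightarrow> ('a \<Rightarrow> 'g option)
     \<Rightarrow> 'g set \<Rightarrow> bool" where
  "krasner_norm add zero G v \<rho> \<longleftrightarrow>
     initial_segment G (value_group v) \<rho> \<and> og_zero G \<in> \<rho> \<and>
     (\<forall>x y z t. z \<in> add x y \<longrightarrow>
        (t \<in> add x y \<longleftrightarrow>
          (\<forall>s\<in>hsub add zero z t. above_shift G \<rho> (v s) (ext_min G (v x) (v y)))))"

definition krasner_valuation ::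
  "('a \<Rightarrow> 'a \<Rightarrow> 'a set) \<Rightarrow> ('a \<Rightarrow> 'a \<Rightarrow> 'a) \<Rightarrow> 'a \<Rightarrow> ('g, 'm) ogroup_scheme
     \<Rightarrow> ('a \<Rightarrow> 'g option) \<Rightarrow> bool" where
  "krasner_valuation add mul zero G v \<longleftrightarrow>
     valuation add mul zero G v \<and>
     (\<forall>x y. zero \<notin> add x y \<longrightarrow> (\<exists>c. v ` add x y = {c})) \<and>
     (\<exists>\<rho>. krasner_norm add zero G v \<rho>)"

definition coset :: "('g::linordered_ab_group_add) set \<Rightarrow> 'g \<Rightarrow> 'g set" where
  "coset \<Delta> \<gamma> = (\<lambda>\<delta>. \<gamma> + \<delta>) ` \<Delta>"

definition quotient_og :: "('g::linordered_ab_group_add) set \<Rightarrow> 'g set \<Rightarrow> 'g set ogroup" where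
  "quotient_og S \<Delta> =
     \<lparr>og_carrier = coset \<Delta> ` S,
      og_add = (\<lambda>A B. {a + b |a b. a \<in> A \<and> b \<in> B}),
      og_zero = \<Delta>,
      og_le = (\<lambda>A B. A = B \<or> (\<exists>x\<in>A. \<exists>y\<in>B. x < y \<and> y - x \<notin> \<Delta>))\<rparr>"

definition coarsening ::
  "('a \<Rightarrow> ('g::linordered_ab_group_add) option) \<Rightarrow> 'g set \<Rightarrow> 'a \<Rightarrow> 'g set option" where
  "coarsening v \<Delta> x = map_option (coset \<Delta>) (v x)"

end

theory Submission
  imports Defs
begin

text \<open>In a Krasner valued hyperfield the norm controls the hyperaddition: \<open>t \<in> x - x\<close> iff
  \<open>v t > \<rho> + v x\<close>. Hence \<open>x - x \<subseteq> 1 - 1\<close> iff \<open>\<rho> - v x \<subseteq> \<rho>\<close>, i.e. iff \<open>v x\<close> is nonnegative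
  modulo the convex subgroup \<open>ig(\<rho>)\<close>. So \<open>w\<close> and the coarsening of \<open>v\<close> by \<open>ig(\<rho>)\<close> have the
  same valuation ring, and two valuations with the same ring are equivalent. The coarsening is again
  Krasner, with norm the image of \<open>\<rho>\<close>, because \<open>\<rho>\<close> is a union of cosets of \<open>ig(\<rho>)\<close>.\<close>

lemma mem_shift_type_og_iff: "x \<in> shift type_og \<rho> g \<longleftrightarrow> x - g \<in> \<rho>"
  unfolding shift_def type_og_def by (auto simp: image_iff) (metis diff_add_cancel)

lemma mem_ig_type_og_iff: "g \<in> ig type_og \<rho> \<longleftrightarrow> (\<forall>x. x - g \<in> \<rho> \<longleftrightarrow> x \<in> \<rho>)"
  unfolding ig_def by (auto simp: mem_shift_type_og_iff[symmetric]) (simp_all add: type_og_def)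

lemma initial_segment_type_og_iff:
  "initial_segment type_og UNIV \<rho> \<longleftrightarrow> (\<forall>a b. b \<in> \<rho> \<longrightarrow> a \<le> b \<longrightarrow> a \<in> \<rho>)"
  unfolding initial_segment_def type_og_def by (auto simp: order.order_iff_strict)

locale convex_subgroup =
  fixes \<Delta> :: "'g::linordered_ab_group_add set"
  assumes zero_mem: "0 \<in> \<Delta>"
    and diff_mem: "a \<in> \<Delta> \<Longrightarrow> b \<in> \<Delta> \<Longrightarrow> a - b \<in> \<Delta>"
    and convex: "a \<in> \<Delta> \<Longrightarrow> b \<in> \<Delta> \<Longrightarrow> a \<le> c \<Longrightarrow> c \<le> b \<Longrightarrow> c \<in> \<Delta>"
begin

lemma uminus_mem: "a \<in> \<Delta> \<Longrightarrow> - a \<in> \<Delta>"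
  using diff_mem[OF zero_mem] by fastforce

lemma add_mem: "a \<in> \<Delta> \<Longrightarrow> b \<in> \<Delta> \<Longrightarrow> a + b \<in> \<Delta>"
  using diff_mem[of a "- b"] uminus_mem by simp

text \<open>The positive cone of the order of \<open>\<Gamma>/\<Delta>\<close>, pulled back to \<open>\<Gamma>\<close>.\<close>
definition cone :: "'g set" where
  "cone = {g. 0 \<le> g \<or> g \<in> \<Delta>}"

lemma cone_add: "a \<in> cone \<Longrightarrow> b \<in> cone \<Longrightarrow> a + b \<in> cone"
proof -
  have nonneg_plus_mem: "d + e \<in> cone" if "d \<in> \<Delta>" "0 \<le> e" for d e
    using convex[OF that(1) zero_mem, of "d + e"] that(2) by (force simp: cone_def)
  assume "a \<in> cone" "b \<in> cone"
  then show ?thesis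
    using add_mem nonneg_plus_mem[of a b] nonneg_plus_mem[of b a]
    by (auto simp: cone_def add.commute)
qed

lemma cone_total: "g \<in> cone \<or> - g \<in> cone"
  unfolding cone_def by auto

lemma cone_antisym: "g \<in> cone \<Longrightarrow> - g \<in> cone \<Longrightarrow> g \<in> \<Delta>"
  unfolding cone_def using zero_mem uminus_mem by force

lemma mem_coset_iff: "x \<in> coset \<Delta> a \<longleftrightarrow> x - a \<in> \<Delta>"
  unfolding coset_def by (auto simp: image_iff) (metis add_diff_cancel_left' diff_add_cancel add.commute)

lemma coset_eq_iff: "coset \<Delta> a = coset \<Delta> b \<longleftrightarrow> b - a \<in> \<Delta>"
proof
  assume "coset \<Delta> a = coset \<Delta> b"
  then show "b - a \<in> \<Delta>"
    using mem_coset_iff zero_mem by (metis diff_self)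
next
  assume "b - a \<in> \<Delta>"
  then have "x - a \<in> \<Delta> \<longleftrightarrow> x - b \<in> \<Delta>" for x
    using add_mem[of "x - b" "b - a"] diff_mem[of "x - a" "b - a"] by auto
  then show "coset \<Delta> a = coset \<Delta> b"
    by (auto simp: mem_coset_iff)
qed

lemma quotient_og_add_coset:
  "og_add (quotient_og S \<Delta>) (coset \<Delta> a) (coset \<Delta> b) = coset \<Delta> (a + b)"
proof -
  have "{x + y |x y. x \<in> coset \<Delta> a \<and> y \<in> coset \<Delta> b} = coset \<Delta> (a + b)"
  proof (intro set_eqI iffI)
    fix z assume "z \<in> {x + y |x y. x \<in> coset \<Delta> a \<and> y \<in> coset \<Delta> b}"
    then obtain x y where "z = x + y" "x - a \<in> \<Delta>" "y - b \<in> \<Delta>"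
      by (auto simp: mem_coset_iff)
    then show "z \<in> coset \<Delta> (a + b)"
      using add_mem[of "x - a" "y - b"] by (simp add: mem_coset_iff algebra_simps)
  next
    fix z assume "z \<in> coset \<Delta> (a + b)"
    then have "z - b \<in> coset \<Delta> a" "b \<in> coset \<Delta> b"
      by (auto simp: mem_coset_iff zero_mem diff_diff_eq add.commute)
    then show "z \<in> {x + y |x y. x \<in> coset \<Delta> a \<and> y \<in> coset \<Delta> b}"
      by (metis (mono_tags, lifting) diff_add_cancel mem_Collect_eq)
  qed
  then show ?thesis
    by (simp add: quotient_og_def)
qed

lemma quotient_og_zero: "og_zero (quotient_og S \<Delta>) = coset \<Delta> 0"
  by (auto simp: quotient_og_def mem_coset_iff)

lemma quotient_og_le_coset_iff:
  "og_le (quotient_og S \<Delta>) (coset \<Delta> a) (coset \<Delta> b) \<longleftrightarrow> b - a \<in> cone"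
proof
  assume "og_le (quotient_og S \<Delta>) (coset \<Delta> a) (coset \<Delta> b)"
  then consider "coset \<Delta> a = coset \<Delta> b"
    | x y where "x - a \<in> \<Delta>" "y - b \<in> \<Delta>" "x < y"
    by (auto simp: quotient_og_def mem_coset_iff)
  then show "b - a \<in> cone"
  proof cases
    case 1
    then show ?thesis by (simp add: coset_eq_iff cone_def)
  next
    case 2
    have "y - x \<in> cone" "(x - a) - (y - b) \<in> cone"
      using 2 diff_mem by (auto simp: cone_def)
    then show ?thesis
      using cone_add by fastforce
  qed
next
  assume "b - a \<in> cone"
  then have "coset \<Delta> a = coset \<Delta> b \<or> a < b \<and> b - a \<notin> \<Delta>"
    by (auto simp: cone_def coset_eq_iff order.order_iff_strict zero_mem)
  moreover have "a \<in> coset \<Delta> a" "b \<in> coset \<Delta> b"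
    by (simp_all add: mem_coset_iff zero_mem)
  ultimately show "og_le (quotient_og S \<Delta>) (coset \<Delta> a) (coset \<Delta> b)"
    unfolding quotient_og_def by auto
qed

lemma og_carrier_quotient_og: "og_carrier (quotient_og S \<Delta>) = coset \<Delta> ` S"
  by (simp add: quotient_og_def)

abbreviation Q :: "'g set ogroup" where
  "Q \<equiv> quotient_og UNIV \<Delta>"

lemma ordered_abelian_group_quotient_og: "ordered_abelian_group Q"
  unfolding ordered_abelian_group_def og_carrier_quotient_og quotient_og_zero
proof (intro conjI ballI impI; (elim imageE)?)
  fix A B a b assume "A = coset \<Delta> a" "B = coset \<Delta> b"
  then show "og_add Q A B \<in> range (coset \<Delta>)"
    by (simp add: quotient_og_add_coset)
  show "og_add Q A B = og_add Q B A"
    using \<open>A = _\<close> \<open>B = _\<close> by (simp add: quotient_og_add_coset add.commute)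
  show "og_le Q A B \<or> og_le Q B A"
    using \<open>A = _\<close> \<open>B = _\<close> cone_total by (simp add: quotient_og_le_coset_iff) (metis minus_diff_eq)
  assume "og_le Q A B" "og_le Q B A"
  then show "A = B"
    using \<open>A = _\<close> \<open>B = _\<close> cone_antisym
    by (simp add: quotient_og_le_coset_iff coset_eq_iff)
next
  fix A B C a b c assume "A = coset \<Delta> a" "B = coset \<Delta> b" "C = coset \<Delta> c"
  then show "og_add Q (og_add Q A B) C = og_add Q A (og_add Q B C)"
    by (simp add: quotient_og_add_coset add.assoc)
  {
    assume "og_le Q A B" "og_le Q B C"
    then show "og_le Q A C"
      using \<open>A = _\<close> \<open>B = _\<close> \<open>C = _\<close> cone_add[of "c - b" "b - a"]
      by (simp add: quotient_og_le_coset_iff)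
  }
  assume "og_le Q A B"
  then show "og_le Q (og_add Q A C) (og_add Q B C)"
    using \<open>A = _\<close> \<open>B = _\<close> \<open>C = _\<close> by (simp add: quotient_og_add_coset quotient_og_le_coset_iff)
next
  fix A a assume "A = coset \<Delta> a"
  then show "og_add Q (coset \<Delta> 0) A = A" "og_le Q A A"
    by (simp_all add: quotient_og_add_coset quotient_og_le_coset_iff cone_def)
  have "og_add Q A (coset \<Delta> (- a)) = coset \<Delta> 0"
    using \<open>A = _\<close> by (simp add: quotient_og_add_coset)
  then show "\<exists>B\<in>range (coset \<Delta>). og_add Q A B = coset \<Delta> 0"
    by blast
qed simp

end

lemma convex_subgroup_ig:
  assumes "initial_segment type_og UNIV \<rho>"
  shows "convex_subgroup (ig type_og \<rho>)"
proof
  have down: "b \<in> \<rho> \<Longrightarrow> a \<le> b \<Longrightarrow> a \<in> \<rho>" for a b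
    using assms by (simp add: initial_segment_type_og_iff)
  show "0 \<in> ig type_og \<rho>"
    by (simp add: mem_ig_type_og_iff)
  fix a b c
  assume "a \<in> ig type_og \<rho>" "b \<in> ig type_og \<rho>"
  then have a: "x - a \<in> \<rho> \<longleftrightarrow> x \<in> \<rho>" and b: "x - b \<in> \<rho> \<longleftrightarrow> x \<in> \<rho>" for x
    by (simp_all add: mem_ig_type_og_iff)
  show "a - b \<in> ig type_og \<rho>"
    unfolding mem_ig_type_og_iff using a b by (metis diff_diff_eq2 diff_add_cancel)
  assume "a \<le> c" "c \<le> b"
  then have "x - c \<in> \<rho> \<longleftrightarrow> x \<in> \<rho>" for x
    using a[of x] b[of x] down[of "x - a" "x - c"] down[of "x - c" "x - b"] by auto
  then show "c \<in> ig type_og \<rho>"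
    by (simp add: mem_ig_type_og_iff)
qed

lemma diff_mem_initial_segment_iff_cone:
  assumes "initial_segment type_og UNIV \<rho>"
  shows "(\<forall>r\<in>\<rho>. r - g \<in> \<rho>) \<longleftrightarrow> g \<in> convex_subgroup.cone (ig type_og \<rho>)"
proof -
  interpret convex_subgroup "ig type_og \<rho>"
    using convex_subgroup_ig[OF assms] .
  have down: "b \<in> \<rho> \<Longrightarrow> a \<le> b \<Longrightarrow> a \<in> \<rho>" for a b
    using assms by (simp add: initial_segment_type_og_iff)
  show ?thesis
  proof (cases "0 \<le> g")
    case True
    then show ?thesis
      using down[of _ "_ - g"] by (simp add: cone_def)
  next
    case False
    then have "x - g \<in> \<rho> \<Longrightarrow> x \<in> \<rho>" for x
      using down[of "x - g" x] by simp
    then show ?thesis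
      using False by (auto simp: cone_def mem_ig_type_og_iff)
  qed
qed

lemma value_group_type_og:
  assumes "valuation add mul zero type_og v"
  shows "value_group v = UNIV"
proof -
  have "Some g \<in> range v" for g
    using assms by (simp add: valuation_def type_og_def)
  then show ?thesis
    unfolding value_group_def by (auto simp: image_iff eq_commute)
qed

context convex_subgroup
begin

lemma ext_add_coarsening:
  "map_option (coset \<Delta>) (ext_add type_og p q) = ext_add Q (map_option (coset \<Delta>) p) (map_option (coset \<Delta>) q)"
  by (cases p; cases q) (simp_all add: type_og_def quotient_og_add_coset)

lemma ext_le_coarsening:
  "ext_le type_og p q \<Longrightarrow> ext_le Q (map_option (coset \<Delta>) p) (map_option (coset \<Delta>) q)"
  by (cases p; cases q) (simp_all add: type_og_def quotient_og_le_coset_iff cone_def)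

lemma ext_min_coarsening:
  "ext_min Q (map_option (coset \<Delta>) p) (map_option (coset \<Delta>) q) = map_option (coset \<Delta>) (ext_min type_og p q)"
proof (cases p; cases q)
  fix a b assume "p = Some a" "q = Some b"
  then show ?thesis
    using cone_antisym[of "b - a"]
    by (auto simp: ext_min_def type_og_def quotient_og_le_coset_iff coset_eq_iff cone_def)
qed (simp_all add: ext_min_def)

lemma mem_shift_quotient_iff:
  assumes "\<Delta> \<subseteq> ig type_og \<rho>"
  shows "coset \<Delta> s \<in> shift Q (coset \<Delta> ` \<rho>) (coset \<Delta> m) \<longleftrightarrow> s - m \<in> \<rho>"
proof
  assume "coset \<Delta> s \<in> shift Q (coset \<Delta> ` \<rho>) (coset \<Delta> m)"
  then obtain r where r: "r \<in> \<rho>" "coset \<Delta> s = coset \<Delta> (r + m)"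
    unfolding shift_def by (auto simp: quotient_og_add_coset)
  then have "r + m - s \<in> ig type_og \<rho>"
    using assms coset_eq_iff by blast
  then have "r - (r + m - s) \<in> \<rho>"
    using r(1) mem_ig_type_og_iff by blast
  then show "s - m \<in> \<rho>"
    by (simp add: algebra_simps)
next
  assume "s - m \<in> \<rho>"
  then have "og_add Q (coset \<Delta> (s - m)) (coset \<Delta> m) \<in> shift Q (coset \<Delta> ` \<rho>) (coset \<Delta> m)"
    unfolding shift_def by blast
  then show "coset \<Delta> s \<in> shift Q (coset \<Delta> ` \<rho>) (coset \<Delta> m)"
    by (simp add: quotient_og_add_coset)
qed

lemma above_shift_coarsening:
  assumes "\<Delta> \<subseteq> ig type_og \<rho>"
  shows "above_shift Q (coset \<Delta> ` \<rho>) (map_option (coset \<Delta>) p) (map_option (coset \<Delta>) q)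
    = above_shift type_og \<rho> p q"
  by (cases p; cases q) (simp_all add: mem_shift_quotient_iff[OF assms] mem_shift_type_og_iff)

lemma initial_segment_coarsening:
  assumes "initial_segment type_og UNIV \<rho>"
  shows "initial_segment Q (range (coset \<Delta>)) (coset \<Delta> ` \<rho>)"
  unfolding initial_segment_def
proof (intro conjI ballI impI)
  fix B A assume "B \<in> coset \<Delta> ` \<rho>" "A \<in> range (coset \<Delta>)" "og_le Q A B \<and> A \<noteq> B"
  then obtain a b where ab: "B = coset \<Delta> b" "b \<in> \<rho>" "A = coset \<Delta> a" "og_le Q A B" "A \<noteq> B"
    by blast
  then have "b - a \<in> cone" "b - a \<notin> \<Delta>"
    by (simp_all add: quotient_og_le_coset_iff coset_eq_iff)
  then have "a \<le> b"
    by (simp add: cone_def)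
  then show "A \<in> coset \<Delta> ` \<rho>"
    using ab assms by (auto simp: initial_segment_type_og_iff)
qed blast

lemma valuation_coarsening:
  assumes "valuation add mul zero type_og v"
  shows "valuation add mul zero Q (coarsening v \<Delta>)"
  unfolding valuation_def
proof (intro conjI allI impI)
  have "range v = insert None (range Some)"
    using assms by (simp add: valuation_def type_og_def)
  moreover have "range (coarsening v \<Delta>) = map_option (coset \<Delta>) ` range v"
    by (auto simp: coarsening_def)
  ultimately show "range (coarsening v \<Delta>) = insert None (Some ` og_carrier Q)"
    by (simp add: og_carrier_quotient_og image_image)
  show "coarsening v \<Delta> x = None \<longleftrightarrow> x = zero" for x
    using assms by (simp add: valuation_def coarsening_def)
  show "coarsening v \<Delta> (mul x y) = ext_add Q (coarsening v \<Delta> x) (coarsening v \<Delta> y)" for x y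
    using assms by (simp add: valuation_def coarsening_def ext_add_coarsening)
  fix x y z assume "z \<in> add x y"
  then show "ext_le Q (ext_min Q (coarsening v \<Delta> x) (coarsening v \<Delta> y)) (coarsening v \<Delta> z)"
    using assms unfolding coarsening_def ext_min_coarsening
    by (simp add: valuation_def ext_le_coarsening)
qed (rule ordered_abelian_group_quotient_og)

lemma krasner_valuation_coarsening:
  assumes "krasner_valuation add mul zero type_og v" "krasner_norm add zero type_og v \<rho>"
    and "\<Delta> \<subseteq> ig type_og \<rho>"
  shows "krasner_valuation add mul zero Q (coarsening v \<Delta>)"
proof -
  have v: "valuation add mul zero type_og v"
    using assms(1) by (simp add: krasner_valuation_def)
  have "value_group (coarsening v \<Delta>) = range (coset \<Delta>)"
    using value_group_type_og[OF v] by (force simp: value_group_def coarsening_def)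
  then have "krasner_norm add zero Q (coarsening v \<Delta>) (coset \<Delta> ` \<rho>)"
    unfolding krasner_norm_def
  proof (intro conjI allI impI)
    show "initial_segment Q (value_group (coarsening v \<Delta>)) (coset \<Delta> ` \<rho>)"
      using assms(2) initial_segment_coarsening
      by (simp add: \<open>value_group _ = _\<close> krasner_norm_def value_group_type_og[OF v])
    show "og_zero Q \<in> coset \<Delta> ` \<rho>"
      using assms(2) by (simp add: krasner_norm_def quotient_og_zero type_og_def)
    fix x y z t assume "z \<in> add x y"
    then show "t \<in> add x y \<longleftrightarrow> (\<forall>s\<in>hsub add zero z t.
        above_shift Q (coset \<Delta> ` \<rho>) (coarsening v \<Delta> s) (ext_min Q (coarsening v \<Delta> x) (coarsening v \<Delta> y)))"
      using assms(2) unfolding coarsening_def ext_min_coarsening above_shift_coarsening[OF assms(3)]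
      by (simp add: krasner_norm_def)
  qed
  moreover have "\<exists>c. coarsening v \<Delta> ` add x y = {c}" if zero_notin: "zero \<notin> add x y" for x y
  proof -
    obtain c where "v ` add x y = {c}"
      using assms(1) zero_notin unfolding krasner_valuation_def by blast
    then have "coarsening v \<Delta> ` add x y = {map_option (coset \<Delta>) c}"
      unfolding coarsening_def by (metis image_empty image_image image_insert)
    then show ?thesis ..
  qed
  ultimately show ?thesis
    using valuation_coarsening[OF v] unfolding krasner_valuation_def by blast
qed

lemma valuation_ring_coarsening:
  "valuation_ring Q (coarsening v \<Delta>) = {x. \<forall>g. v x = Some g \<longrightarrow> g \<in> cone}"
proof -
  have "ext_le Q (Some (og_zero Q)) (map_option (coset \<Delta>) p) \<longleftrightarrow> (\<forall>g. p = Some g \<longrightarrow> g \<in> cone)" for p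
    by (cases p) (simp_all add: quotient_og_zero quotient_og_le_coset_iff)
  then show ?thesis
    by (simp add: valuation_ring_def coarsening_def)
qed

end

locale hyperfield_struct =
  fixes add :: "'a \<Rightarrow> 'a \<Rightarrow> 'a set" and mul :: "'a \<Rightarrow> 'a \<Rightarrow> 'a" and zero one :: 'a
  assumes hyperfield: "hyperfield add mul zero one"
begin

abbreviation neg :: "'a \<Rightarrow> 'a" where
  "neg \<equiv> hneg add zero"

lemma
  shows ex1_neg: "\<exists>!y. zero \<in> add x y"
    and add_zero_left: "add zero x = {x}"
    and add_commute: "add x y = add y x"
    and mul_commute: "mul x y = mul y x"
    and mul_zero_left: "mul zero x = zero"
    and mul_one_left: "mul one x = x"
    and mul_distrib: "mul x ` add y z = add (mul x y) (mul x z)"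
    and one_neq_zero: "one \<noteq> zero"
    and ex_inverse: "x \<noteq> zero \<Longrightarrow> \<exists>y. mul x y = one"
  using hyperfield unfolding hyperfield_def by (elim conjE; metis)+

lemma zero_mem_add_neg: "zero \<in> add x (neg x)"
  unfolding hneg_def using theI'[OF ex1_neg] .

lemma neg_unique: "zero \<in> add x y \<Longrightarrow> y = neg x"
  unfolding hneg_def by (rule the1_equality[OF ex1_neg, symmetric])

lemma mul_zero_right: "mul x zero = zero"
  using mul_zero_left mul_commute by metis

lemma mul_one_right: "mul x one = x"
  using mul_one_left mul_commute by metis

lemma neg_eq_mul_neg_one: "neg x = mul x (neg one)"
proof -
  have "mul x zero \<in> mul x ` add one (neg one)"
    using zero_mem_add_neg by blast
  then have "zero \<in> add x (mul x (neg one))"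
    by (simp add: mul_distrib mul_zero_right mul_one_right)
  then show ?thesis
    by (rule neg_unique[symmetric])
qed

lemma neg_neg: "neg (neg x) = x"
  using neg_unique[of "neg x" x] zero_mem_add_neg[of x] add_commute by metis

lemma neg_one_square: "mul (neg one) (neg one) = one"
  using neg_eq_mul_neg_one[of "neg one"] neg_neg by simp

context
  fixes u :: "'a \<Rightarrow> ('g::linordered_ab_group_add) option"
  assumes valuation: "valuation add mul zero type_og u"
begin

lemma valuation_eq_None_iff: "u x = None \<longleftrightarrow> x = zero"
  using valuation by (simp add: valuation_def)

lemma ex_valuation_eq_Some_iff: "(\<exists>a. u x = Some a) \<longleftrightarrow> x \<noteq> zero"
  using valuation_eq_None_iff[of x] by (cases "u x") auto

lemma valuation_surj: "\<exists>x. u x = Some g"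
proof -
  have "g \<in> value_group u"
    by (simp add: value_group_type_og[OF valuation])
  then show ?thesis
    by (simp add: value_group_def)
qed

lemma valuation_mul: "u x = Some a \<Longrightarrow> u y = Some b \<Longrightarrow> u (mul x y) = Some (a + b)"
  using valuation by (simp add: valuation_def type_og_def)

lemma valuation_one: "u one = Some 0"
proof -
  obtain a where a: "u one = Some a"
    using ex_valuation_eq_Some_iff one_neq_zero by blast
  then have "Some a = Some (a + a)"
    using valuation_mul[OF a a] by (simp add: mul_one_left)
  then show ?thesis
    using a by simp
qed

lemma valuation_inverse:
  assumes "mul x y = one" "u x = Some a"
  shows "u y = Some (- a)"
proof -
  have "y \<noteq> zero"
    using assms(1) mul_zero_right one_neq_zero by metis
  then obtain b where b: "u y = Some b"
    using ex_valuation_eq_Some_iff by blast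
  then have "a + b = 0"
    using valuation_mul[OF assms(2) b] assms(1) valuation_one by simp
  then show ?thesis
    using b by (simp add: eq_neg_iff_add_eq_0 add.commute)
qed

lemma valuation_neg: "u (neg x) = u x"
proof -
  have "neg one \<noteq> zero"
    using neg_one_square mul_zero_left one_neq_zero by metis
  then obtain c where c: "u (neg one) = Some c"
    using ex_valuation_eq_Some_iff by blast
  then have "c = 0"
    using valuation_inverse[OF neg_one_square c] by simp
  show ?thesis
  proof (cases "x = zero")
    case True
    then show ?thesis
      using neg_eq_mul_neg_one[of x] mul_zero_left by simp
  next
    case False
    then obtain b where "u x = Some b"
      using ex_valuation_eq_Some_iff by blast
    then show ?thesis
      using valuation_mul[OF _ c] neg_eq_mul_neg_one[of x] \<open>c = 0\<close> by simp
  qed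
qed

lemma mem_valuation_ring_iff: "u x = Some h \<Longrightarrow> x \<in> valuation_ring type_og u \<longleftrightarrow> 0 \<le> h"
  by (simp add: valuation_ring_def type_og_def)

end

end

locale valuations_with_equal_rings =
  hyperfield_struct add mul zero one + convex_subgroup \<Delta>
  for add :: "'a \<Rightarrow> 'a \<Rightarrow> 'a set" and mul :: "'a \<Rightarrow> 'a \<Rightarrow> 'a" and zero one :: 'a
    and \<Delta> :: "'g::linordered_ab_group_add set" +
  fixes v :: "'a \<Rightarrow> 'g option" and w :: "'a \<Rightarrow> ('h::linordered_ab_group_add) option"
  assumes valuation_v: "valuation add mul zero type_og v"
    and valuation_w: "valuation add mul zero type_og w"
    and valuation_ring_eq: "valuation_ring type_og w = valuation_ring (quotient_og UNIV \<Delta>) (coarsening v \<Delta>)"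
begin

lemma mem_valuation_ring_w_iff: "v x = Some a \<Longrightarrow> x \<in> valuation_ring type_og w \<longleftrightarrow> a \<in> cone"
  by (simp add: valuation_ring_eq valuation_ring_coarsening)

text \<open>Compare \<open>x\<close> and \<open>y\<close> through the ring membership of \<open>y / x\<close>.\<close>
lemma w_le_iff_cone:
  assumes "v x = Some a" "v y = Some b" "w x = Some h" "w y = Some k"
  shows "h \<le> k \<longleftrightarrow> b - a \<in> cone"
proof -
  have "x \<noteq> zero"
    using assms(1) ex_valuation_eq_Some_iff[OF valuation_v] by blast
  then obtain x' where x': "mul x x' = one"
    using ex_inverse by blast
  have "w (mul y x') = Some (k + - h)" "v (mul y x') = Some (b + - a)"
    using valuation_mul[OF valuation_w assms(4) valuation_inverse[OF valuation_w x' assms(3)]]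
      valuation_mul[OF valuation_v assms(2) valuation_inverse[OF valuation_v x' assms(1)]] .
  then have "0 \<le> k + - h \<longleftrightarrow> b + - a \<in> cone"
    using mem_valuation_ring_iff[OF valuation_w] mem_valuation_ring_w_iff by metis
  then show ?thesis
    by simp
qed

text \<open>\<open>SOME\<close> picks an element of \<open>w\<close>-value \<open>h\<close> (one exists as \<open>w\<close> is surjective); by \<open>w_le_iff_cone\<close>
  the resulting coset does not depend on the choice.\<close>
definition \<sigma> :: "'h \<Rightarrow> 'g set" where
  "\<sigma> h = coset \<Delta> (the (v (SOME x. w x = Some h)))"

lemma \<sigma>_eq:
  assumes "w x = Some h" "v x = Some a"
  shows "\<sigma> h = coset \<Delta> a"
proof -
  define x0 where "x0 = (SOME x. w x = Some h)"
  have w_x0: "w x0 = Some h"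
    unfolding x0_def using assms(1) by (rule someI)
  then obtain a0 where v_x0: "v x0 = Some a0"
    using ex_valuation_eq_Some_iff[OF valuation_v] ex_valuation_eq_Some_iff[OF valuation_w] by blast
  have "a - a0 \<in> cone" "- (a - a0) \<in> cone"
    using w_le_iff_cone[OF v_x0 assms(2) w_x0 assms(1)] w_le_iff_cone[OF assms(2) v_x0 assms(1) w_x0]
    by simp_all
  then have "coset \<Delta> a0 = coset \<Delta> a"
    using cone_antisym coset_eq_iff by blast
  then show ?thesis
    unfolding \<sigma>_def x0_def[symmetric] using v_x0 by simp
qed

lemma ex_values_of_w: "\<exists>x a. v x = Some a \<and> w x = Some h"
proof -
  obtain x where "w x = Some h"
    using valuation_surj[OF valuation_w] by blast
  then show ?thesis
    using ex_valuation_eq_Some_iff[OF valuation_v] ex_valuation_eq_Some_iff[OF valuation_w] by blast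
qed

lemma equivalent_valuations_coarsening: "equivalent_valuations type_og w Q (coarsening v \<Delta>)"
  unfolding equivalent_valuations_def
proof (intro exI[of _ \<sigma>] conjI ballI allI)
  have le_iff: "og_le type_og h k \<longleftrightarrow> og_le Q (\<sigma> h) (\<sigma> k)" for h k
  proof -
    obtain x a y b where "v x = Some a" "w x = Some h" "v y = Some b" "w y = Some k"
      using ex_values_of_w by meson
    then show ?thesis
      using w_le_iff_cone by (simp add: \<sigma>_eq quotient_og_le_coset_iff type_og_def)
  qed
  then show "og_le type_og h k \<longleftrightarrow> og_le Q (\<sigma> h) (\<sigma> k)" for h k .
  have "inj \<sigma>"
  proof
    fix h k assume "\<sigma> h = \<sigma> k"
    then have "og_le Q (\<sigma> h) (\<sigma> k)" "og_le Q (\<sigma> k) (\<sigma> h)"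
      by (simp_all add: quotient_og_def)
    then have "h \<le> k" "k \<le> h"
      using le_iff by (simp_all add: type_og_def)
    then show "h = k"
      by simp
  qed
  moreover have "range \<sigma> = range (coset \<Delta>)"
  proof
    show "range \<sigma> \<subseteq> range (coset \<Delta>)"
      by (auto simp: \<sigma>_def)
    show "range (coset \<Delta>) \<subseteq> range \<sigma>"
    proof
      fix A assume "A \<in> range (coset \<Delta>)"
      then obtain a x where "A = coset \<Delta> a" "v x = Some a"
        using valuation_surj[OF valuation_v] by blast
      moreover obtain h where "w x = Some h"
        using calculation(2) ex_valuation_eq_Some_iff[OF valuation_v] ex_valuation_eq_Some_iff[OF valuation_w]
        by blast
      ultimately show "A \<in> range \<sigma>"
        by (metis \<sigma>_eq rangeI)
    qed
  qed
  ultimately show "bij_betw \<sigma> (og_carrier type_og) (og_carrier Q)"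
    by (simp add: bij_betw_def type_og_def og_carrier_quotient_og)
  fix h k
  obtain x a y b where x: "v x = Some a" "w x = Some h" and y: "v y = Some b" "w y = Some k"
    using ex_values_of_w by meson
  have "\<sigma> (h + k) = coset \<Delta> (a + b)"
    using \<sigma>_eq valuation_mul[OF valuation_v x(1) y(1)] valuation_mul[OF valuation_w x(2) y(2)] by blast
  then show "\<sigma> (og_add type_og h k) = og_add Q (\<sigma> h) (\<sigma> k)"
    using \<sigma>_eq x y by (simp add: type_og_def quotient_og_add_coset)
next
  fix x
  show "coarsening v \<Delta> x = map_option \<sigma> (w x)"
  proof (cases "x = zero")
    case True
    then show ?thesis
      using valuation_eq_None_iff[OF valuation_v, of zero] valuation_eq_None_iff[OF valuation_w, of zero]
      by (simp add: coarsening_def)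
  next
    case False
    then obtain a h where "v x = Some a" "w x = Some h"
      using ex_valuation_eq_Some_iff[OF valuation_v] ex_valuation_eq_Some_iff[OF valuation_w] by blast
    then show ?thesis
      by (simp add: coarsening_def \<sigma>_eq)
  qed
qed

end

context hyperfield_struct
begin

lemma krasner_mem_diff_self_iff:
  assumes v: "valuation add mul zero type_og v" and norm: "krasner_norm add zero type_og v \<rho>"
  shows "t \<in> hsub add zero x x \<longleftrightarrow> above_shift type_og \<rho> (v t) (v x)"
proof -
  have "t \<in> add x (neg x) \<longleftrightarrow>
      (\<forall>s\<in>hsub add zero zero t. above_shift type_og \<rho> (v s) (ext_min type_og (v x) (v (neg x))))"
    using norm zero_mem_add_neg[of x] unfolding krasner_norm_def by blast
  then show ?thesis
    by (simp add: hsub_def add_zero_left valuation_neg[OF v] ext_min_def)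
qed

lemma krasner_diff_self_subset_iff:
  assumes v: "valuation add mul zero type_og v" and norm: "krasner_norm add zero type_og v \<rho>"
  shows "hsub add zero x x \<subseteq> hsub add zero one one \<longleftrightarrow> (\<forall>g. v x = Some g \<longrightarrow> (\<forall>r\<in>\<rho>. r - g \<in> \<rho>))"
proof (cases "v x")
  case None
  have "above_shift type_og \<rho> p None \<Longrightarrow> above_shift type_og \<rho> p q" for p q
    by (cases p) simp_all
  then show ?thesis
    using None by (auto simp: krasner_mem_diff_self_iff[OF assms])
next
  case (Some g)
  have "hsub add zero x x \<subseteq> hsub add zero one one \<longleftrightarrow>
      (\<forall>t. above_shift type_og \<rho> (v t) (Some g) \<longrightarrow> above_shift type_og \<rho> (v t) (Some 0))"
    by (auto simp: krasner_mem_diff_self_iff[OF assms] valuation_one[OF v] Some)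
  also have "\<dots> \<longleftrightarrow> (\<forall>a. a - g \<notin> \<rho> \<longrightarrow> a \<notin> \<rho>)"
  proof
    assume shift_mono: "\<forall>t. above_shift type_og \<rho> (v t) (Some g) \<longrightarrow> above_shift type_og \<rho> (v t) (Some 0)"
    show "\<forall>a. a - g \<notin> \<rho> \<longrightarrow> a \<notin> \<rho>"
    proof (intro allI)
      fix a
      obtain t where "v t = Some a"
        using valuation_surj[OF v] by blast
      then show "a - g \<notin> \<rho> \<longrightarrow> a \<notin> \<rho>"
        using shift_mono[rule_format, of t] by (simp add: mem_shift_type_og_iff)
    qed
  next
    assume "\<forall>a. a - g \<notin> \<rho> \<longrightarrow> a \<notin> \<rho>"
    then show "\<forall>t. above_shift type_og \<rho> (v t) (Some g) \<longrightarrow> above_shift type_og \<rho> (v t) (Some 0)"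
    proof (intro allI impI)
      fix t assume "above_shift type_og \<rho> (v t) (Some g)"
      then show "above_shift type_og \<rho> (v t) (Some 0)"
        using \<open>\<forall>a. a - g \<notin> \<rho> \<longrightarrow> a \<notin> \<rho>\<close> by (cases "v t") (simp_all add: mem_shift_type_og_iff)
    qed
  qed
  finally show ?thesis
    using Some by auto
qed

end

theorem theorem6p2:
  fixes add :: "'a \<Rightarrow> 'a \<Rightarrow> 'a set" and mul :: "'a \<Rightarrow> 'a \<Rightarrow> 'a"
    and zero one :: 'a
    and v :: "'a \<Rightarrow> ('g::linordered_ab_group_add) option" and \<rho> :: "'g set"
    and w :: "'a \<Rightarrow> ('h::linordered_ab_group_add) option"
  assumes "hyperfield add mul zero one"
    and "krasner_valuation add mul zero type_og v"
    and "krasner_norm add zero type_og v \<rho>"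
    and "valuation add mul zero type_og w"
    and "valuation_ring type_og w = {x. hsub add zero x x \<subseteq> hsub add zero one one}"
  shows "equivalent_valuations type_og w
           (quotient_og (value_group v) (ig type_og \<rho>)) (coarsening v (ig type_og \<rho>))
       \<and> krasner_valuation add mul zero
           (quotient_og (value_group v) (ig type_og \<rho>)) (coarsening v (ig type_og \<rho>))"
proof -
  interpret hyperfield_struct add mul zero one
    using assms(1) by (rule hyperfield_struct.intro)
  have v: "valuation add mul zero type_og v"
    using assms(2) by (simp add: krasner_valuation_def)
  have segment: "initial_segment type_og UNIV \<rho>"
    using assms(3) by (simp add: krasner_norm_def value_group_type_og[OF v])
  interpret convex_subgroup "ig type_og \<rho>"
    using convex_subgroup_ig[OF segment] .
  have "valuation_ring type_og w = valuation_ring Q (coarsening v (ig type_og \<rho>))"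
    unfolding assms(5) valuation_ring_coarsening
    using krasner_diff_self_subset_iff[OF v assms(3)] diff_mem_initial_segment_iff_cone[OF segment]
    by blast
  then interpret valuations_with_equal_rings add mul zero one "ig type_og \<rho>" v w
    using v assms(4) by unfold_locales
  show ?thesis
    unfolding value_group_type_og[OF v]
    using equivalent_valuations_coarsening krasner_valuation_coarsening[OF assms(2,3) subset_refl] ..
qed

end
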